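(* Let $G=(V,E)$ be a connected (finite, simple) graph. If there is a set $D\subseteq V$ such that $G[D]$ is connected and every vertex in $V\setminus D$ has at least two neighbors in $D$, then $\mathrm{rc}(G) \le |D|+1$.
   Context: For an edge-coloring of a graph $G$, a path is rainbow if no two of its edges have the same color; $G$ is rainbow-connected if every pair of vertices is joined by a rainbow path. The rainbow connection number $\mathrm{rc}(G)$ is the minimum number of colors in an edge-coloring making $G$ rainbow-connected. $G[D]$ denotes the subgraph induced by $D$. *)

theory Defs
  imports Main
begin

definition simple_graph :: "'a set \<Rightarrow> 'a set set \<Rightarrow> bool" where
  "simple_graph V E \<longleftrightarrow> finite V \<and> (\<forall>e\<in>E. e \<subseteq> V \<and> card e = 2)"

fun path_edges :: "'a list \<Rightarrow> 'a set list" where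
  "path_edges (x # y # xs) = {x, y} # path_edges (y # xs)"
| "path_edges _ = []"

definition is_path :: "'a set \<Rightarrow> 'a set set \<Rightarrow> 'a list \<Rightarrow> 'a \<Rightarrow> 'a \<Rightarrow> bool" where
  "is_path V E p u v \<longleftrightarrow> p \<noteq> [] \<and> hd p = u \<and> last p = v \<and> distinct p
     \<and> set p \<subseteq> V \<and> set (path_edges p) \<subseteq> E"

definition connected_graph :: "'a set \<Rightarrow> 'a set set \<Rightarrow> bool" where
  "connected_graph V E \<longleftrightarrow> V \<noteq> {} \<and> (\<forall>u\<in>V. \<forall>v\<in>V. \<exists>p. is_path V E p u v)"

definition induced_edges :: "'a set set \<Rightarrow> 'a set \<Rightarrow> 'a set set" where
  "induced_edges E D = {e \<in> E. e \<subseteq> D}"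

definition neighbors :: "'a set set \<Rightarrow> 'a \<Rightarrow> 'a set" where
  "neighbors E v = {u. {v, u} \<in> E}"

definition rainbow :: "('a set \<Rightarrow> 'c) \<Rightarrow> 'a list \<Rightarrow> bool" where
  "rainbow c p \<longleftrightarrow> distinct (map c (path_edges p))"

definition rainbow_connected :: "'a set \<Rightarrow> 'a set set \<Rightarrow> ('a set \<Rightarrow> 'c) \<Rightarrow> bool" where
  "rainbow_connected V E c \<longleftrightarrow>
     (\<forall>u\<in>V. \<forall>v\<in>V. \<exists>p. is_path V E p u v \<and> rainbow c p)"

definition rc :: "'a set \<Rightarrow> 'a set set \<Rightarrow> nat" where
  "rc V E = (LEAST k. \<exists>c :: 'a set \<Rightarrow> nat. (\<forall>e\<in>E. c e < k) \<and> rainbow_connected V E c)"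

end

theory Submission
  imports Defs
begin

(* Grow a spanning tree of G[D] vertex by vertex, giving each new tree edge a fresh colour:
   tree paths are rainbow, so rc(G[D]) <= |D| - 1.  For every v outside D fix two neighbours
   a v, b v in D, colour the edge to a v with 0, every other edge leaving D (in particular the
   one to b v) with 1, and shift the colours inside D by 2.  A u-v path entering D via a u,
   following a rainbow path of G[D] and leaving D via b v is then rainbow, whence
   rc(G) <= rc(G[D]) + 2 <= |D| + 1. *)

lemma path_edges_Cons: "p \<noteq> [] \<Longrightarrow> path_edges (u # p) = {u, hd p} # path_edges p"
  by (cases p) auto

lemma path_edges_snoc: "p \<noteq> [] \<Longrightarrow> path_edges (p @ [v]) = path_edges p @ [{last p, v}]"
  by (induction p rule: path_edges.induct) auto

lemma path_edges_subset: "set p \<subseteq> T \<Longrightarrow> e \<in> set (path_edges p) \<Longrightarrow> e \<subseteq> T"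
  by (induction p rule: path_edges.induct) auto

lemma is_path_singleton: "v \<in> V \<Longrightarrow> is_path V E [v] v v"
  unfolding is_path_def by simp

lemma is_path_mono: "is_path T E p x y \<Longrightarrow> T \<subseteq> V \<Longrightarrow> is_path V E p x y"
  unfolding is_path_def by auto

lemma is_path_induced:
  "is_path D (induced_edges E D) p x y \<Longrightarrow> D \<subseteq> V \<Longrightarrow> is_path V E p x y \<and> set p \<subseteq> D"
  unfolding is_path_def induced_edges_def by auto

lemma rainbow_singleton: "rainbow c [v]"
  unfolding rainbow_def by simp

lemma rainbow_cong:
  "(\<And>e. e \<in> set (path_edges p) \<Longrightarrow> c' e = c e) \<Longrightarrow> rainbow c' p \<longleftrightarrow> rainbow c p"
  unfolding rainbow_def by (metis map_cong)

lemma rainbow_shift: "rainbow (\<lambda>e. c e + k :: nat) p \<longleftrightarrow> rainbow c p"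
  unfolding rainbow_def by (simp add: distinct_map inj_on_def comp_def)

lemma rainbow_path_Cons:
  assumes "is_path V E p x y" "rainbow c p" "u \<in> V" "u \<notin> set p" "{u, x} \<in> E"
    and "c {u, x} \<notin> c ` set (path_edges p)"
  shows "is_path V E (u # p) u y \<and> rainbow c (u # p)"
proof -
  have "p \<noteq> []" "hd p = x" using assms(1) unfolding is_path_def by auto
  then show ?thesis using assms unfolding is_path_def rainbow_def by (auto simp: path_edges_Cons)
qed

lemma rainbow_path_snoc:
  assumes "is_path V E p x y" "rainbow c p" "v \<in> V" "v \<notin> set p" "{y, v} \<in> E"
    and "c {y, v} \<notin> c ` set (path_edges p)"
  shows "is_path V E (p @ [v]) x v \<and> rainbow c (p @ [v])"
proof -
  have "p \<noteq> []" "last p = y" using assms(1) unfolding is_path_def by auto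
  then show ?thesis using assms unfolding is_path_def rainbow_def by (auto simp: path_edges_snoc)
qed

definition rainbow_connected_below :: "'a set \<Rightarrow> 'a set set \<Rightarrow> ('a set \<Rightarrow> nat) \<Rightarrow> nat \<Rightarrow> bool" where
  "rainbow_connected_below V E c k \<longleftrightarrow>
     (\<forall>x\<in>V. \<forall>y\<in>V. \<exists>p. is_path V E p x y \<and> rainbow c p \<and> (\<forall>e\<in>set (path_edges p). c e < k))"

lemma rainbow_connected_below_singleton: "rainbow_connected_below {r} E c 0"
  unfolding rainbow_connected_below_def using is_path_singleton rainbow_singleton by fastforce

lemma rainbow_connected_below_fun_upd:
  assumes "rainbow_connected_below T E c k" "\<not> e \<subseteq> T"
  shows "rainbow_connected_below T E (c(e := n)) k"
  unfolding rainbow_connected_below_def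
proof (intro ballI)
  fix x y assume "x \<in> T" "y \<in> T"
  then obtain p where p: "is_path T E p x y" "rainbow c p" "\<forall>e'\<in>set (path_edges p). c e' < k"
    using assms(1) unfolding rainbow_connected_below_def by blast
  have same: "\<And>e'. e' \<in> set (path_edges p) \<Longrightarrow> (c(e := n)) e' = c e'"
    using path_edges_subset[of p T] p(1) assms(2) unfolding is_path_def by auto
  then have "rainbow (c(e := n)) p" using rainbow_cong[of p "c(e := n)" c] p(2) by blast
  then show "\<exists>p. is_path T E p x y \<and> rainbow (c(e := n)) p \<and> (\<forall>e'\<in>set (path_edges p). (c(e := n)) e' < k)"
    using p(1,3) same by metis
qed

lemma rainbow_connected_below_insert:
  assumes below: "rainbow_connected_below T E c k" and "t \<in> T" "w \<notin> T" "{t, w} \<in> E"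
  shows "rainbow_connected_below (insert w T) E (c({t, w} := k)) (Suc k)"
proof -
  let ?T = "insert w T" and ?c = "c({t, w} := k)"
  have "\<not> {t, w} \<subseteq> T" using \<open>w \<notin> T\<close> by blast
  then have below': "rainbow_connected_below T E ?c k"
    using rainbow_connected_below_fun_upd[OF below] by blast
  have within_T: "\<exists>p. is_path ?T E p x y \<and> set p \<subseteq> T \<and> rainbow ?c p \<and> (\<forall>e\<in>set (path_edges p). ?c e < k)"
    if "x \<in> T" "y \<in> T" for x y
  proof -
    obtain p where p: "is_path T E p x y" "rainbow ?c p" "\<forall>e\<in>set (path_edges p). ?c e < k"
      using below' \<open>x \<in> T\<close> \<open>y \<in> T\<close> unfolding rainbow_connected_below_def by blast
    moreover have "set p \<subseteq> T" using p(1) unfolding is_path_def by blast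
    ultimately show ?thesis using is_path_mono[OF p(1), of ?T] by blast
  qed
  have to_w: "\<exists>p. is_path ?T E p x w \<and> rainbow ?c p \<and> (\<forall>e\<in>set (path_edges p). ?c e < Suc k)"
    if x: "x \<in> T" for x
  proof -
    obtain p where p: "is_path ?T E p x t" "set p \<subseteq> T" "rainbow ?c p" "\<forall>e\<in>set (path_edges p). ?c e < k"
      using within_T[OF x \<open>t \<in> T\<close>] by blast
    then have "is_path ?T E (p @ [w]) x w \<and> rainbow ?c (p @ [w])"
      using assms(3,4) by (intro rainbow_path_snoc) auto
    moreover have "p \<noteq> []" "last p = t" using p(1) unfolding is_path_def by simp_all
    ultimately show ?thesis
      using p(4) by (intro exI[of _ "p @ [w]"])
        (auto simp: path_edges_snoc fun_upd_same simp del: fun_upd_apply intro: less_SucI)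
  qed
  have from_w: "\<exists>p. is_path ?T E p w y \<and> rainbow ?c p \<and> (\<forall>e\<in>set (path_edges p). ?c e < Suc k)"
    if y: "y \<in> T" for y
  proof -
    obtain p where p: "is_path ?T E p t y" "set p \<subseteq> T" "rainbow ?c p" "\<forall>e\<in>set (path_edges p). ?c e < k"
      using within_T[OF \<open>t \<in> T\<close> y] by blast
    then have "is_path ?T E (w # p) w y \<and> rainbow ?c (w # p)"
      using assms(3,4) by (intro rainbow_path_Cons) (auto simp: insert_commute)
    moreover have "p \<noteq> []" "hd p = t" using p(1) unfolding is_path_def by simp_all
    ultimately show ?thesis
      using p(4) by (intro exI[of _ "w # p"])
        (auto simp: path_edges_Cons insert_commute fun_upd_same simp del: fun_upd_apply intro: less_SucI)
  qed
  show ?thesis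
    unfolding rainbow_connected_below_def
  proof (intro ballI)
    fix x y assume "x \<in> ?T" "y \<in> ?T"
    then consider "x \<in> T" "y \<in> T" | "x \<in> T" "y = w" | "x = w" "y \<in> T" | "x = w" "y = w"
      by blast
    then show "\<exists>p. is_path ?T E p x y \<and> rainbow ?c p \<and> (\<forall>e\<in>set (path_edges p). ?c e < Suc k)"
    proof cases
      case 1
      then show ?thesis using within_T by (meson less_SucI)
    next
      case 4
      then show ?thesis using is_path_singleton[of w ?T] rainbow_singleton by fastforce
    qed (use to_w from_w in blast)+
  qed
qed

lemma path_crossing_edge:
  "p \<noteq> [] \<Longrightarrow> hd p \<in> T \<Longrightarrow> last p \<notin> T \<Longrightarrow> \<exists>a b. {a, b} \<in> set (path_edges p) \<and> a \<in> T \<and> b \<notin> T"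
proof (induction p rule: path_edges.induct)
  case (1 x y xs)
  then show ?case by (cases "y \<in> T") auto
qed auto

lemma connected_graph_crossing_edge:
  assumes "connected_graph V E" "T \<subseteq> V" "t0 \<in> T" "w0 \<in> V - T"
  shows "\<exists>t w. t \<in> T \<and> w \<in> V - T \<and> {t, w} \<in> E"
proof -
  obtain p where p: "is_path V E p t0 w0"
    using assms unfolding connected_graph_def by blast
  then obtain t w where tw: "{t, w} \<in> set (path_edges p)" "t \<in> T" "w \<notin> T"
    using path_crossing_edge[of p T] assms(3,4) unfolding is_path_def by auto
  moreover have "w \<in> V" "{t, w} \<in> E"
    using tw(1) p path_edges_subset[of p V] unfolding is_path_def by auto
  ultimately show ?thesis by blast
qed

lemma connected_graph_rainbow_connected_below:
  assumes "connected_graph V E" "finite V"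
  shows "\<exists>c. rainbow_connected_below V E c (card V - 1)"
proof -
  have "\<exists>T c. T \<subseteq> V \<and> card T = k \<and> rainbow_connected_below T E c (k - 1)"
    if "0 < k" "k \<le> card V" for k
    using that
  proof (induction k rule: nat_induct_non_zero)
    case 1
    obtain r where "r \<in> V" using assms(1) unfolding connected_graph_def by blast
    then show ?case
      using rainbow_connected_below_singleton[of r E "\<lambda>_. 0"] by (intro exI[of _ "{r}"]) auto
  next
    case (Suc k)
    then obtain T c where T: "T \<subseteq> V" "card T = k" "rainbow_connected_below T E c (k - 1)"
      by auto
    have "T \<noteq> {}" "T \<noteq> V" using T(2) \<open>0 < k\<close> Suc.prems by auto
    then obtain t0 w0 where "t0 \<in> T" "w0 \<in> V - T" using T(1) by blast
    then obtain t w where tw: "t \<in> T" "w \<in> V - T" "{t, w} \<in> E"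
      using connected_graph_crossing_edge[OF assms(1) T(1)] by blast
    have "card (insert w T) = Suc k"
      using T(1,2) tw(2) assms(2) finite_subset by fastforce
    moreover have "rainbow_connected_below (insert w T) E (c({t, w} := k - 1)) (Suc k - 1)"
      using rainbow_connected_below_insert[OF T(3) tw(1) _ tw(3)] tw(2) \<open>0 < k\<close> by simp
    ultimately show ?case using T(1) tw(2) by blast
  qed
  moreover have "0 < card V" using assms card_gt_0_iff unfolding connected_graph_def by blast
  ultimately obtain T c where "T \<subseteq> V" "card T = card V" "rainbow_connected_below T E c (card V - 1)"
    by blast
  then show ?thesis using assms(2) card_subset_eq by blast
qed

lemma simple_graph_card_ge_2: "simple_graph V E \<Longrightarrow> e \<in> E \<Longrightarrow> 2 \<le> card V"
  unfolding simple_graph_def by (metis card_mono)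

lemma connected_graph_rainbow_colouring:
  assumes "simple_graph V E" "connected_graph V E"
  shows "\<exists>c. (\<forall>e\<in>E. c e < card V - 1) \<and> rainbow_connected V E c"
proof -
  have "finite V" using assms(1) unfolding simple_graph_def by blast
  then obtain c where c: "rainbow_connected_below V E c (card V - 1)"
    using connected_graph_rainbow_connected_below assms(2) by blast
  \<comment> \<open>Edges on no connecting path may be recoloured freely; \<open>E = {}\<close> when \<open>card V < 2\<close>.\<close>
  define c' where "c' e = (if c e < card V - 1 then c e else 0)" for e
  have "rainbow_connected V E c'"
    unfolding rainbow_connected_def
  proof (intro ballI)
    fix x y assume "x \<in> V" "y \<in> V"
    then obtain p where p: "is_path V E p x y" "rainbow c p" "\<forall>e\<in>set (path_edges p). c e < card V - 1"
      using c unfolding rainbow_connected_below_def by blast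
    then have "rainbow c' p" using rainbow_cong[of p c' c] unfolding c'_def by simp
    then show "\<exists>p. is_path V E p x y \<and> rainbow c' p" using p(1) by blast
  qed
  moreover have "\<forall>e\<in>E. c' e < card V - 1"
    using simple_graph_card_ge_2[OF assms(1)] unfolding c'_def by fastforce
  ultimately show ?thesis by blast
qed

lemma rc_le_card_minus_one:
  "simple_graph V E \<Longrightarrow> connected_graph V E \<Longrightarrow> rc V E \<le> card V - 1"
  unfolding rc_def by (rule Least_le) (rule connected_graph_rainbow_colouring)

lemma rc_optimal_colouring:
  assumes "simple_graph V E" "connected_graph V E"
  shows "\<exists>c. (\<forall>e\<in>E. c e < rc V E) \<and> rainbow_connected V E c"
  unfolding rc_def by (rule LeastI_ex) (use connected_graph_rainbow_colouring[OF assms] in blast)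

lemma simple_graph_induced: "simple_graph V E \<Longrightarrow> D \<subseteq> V \<Longrightarrow> simple_graph D (induced_edges E D)"
  unfolding simple_graph_def induced_edges_def by (auto intro: finite_subset)

lemma card_ge_2_imp_distinct: "2 \<le> card A \<Longrightarrow> \<exists>x\<in>A. \<exists>y\<in>A. x \<noteq> y"
  by (metis card.infinite card_le_Suc0_iff_eq not_less_eq_eq numeral_2_eq_2 le0)

definition extend_colouring :: "'a set \<Rightarrow> ('a \<Rightarrow> 'a) \<Rightarrow> ('a set \<Rightarrow> nat) \<Rightarrow> 'a set \<Rightarrow> nat" where
  "extend_colouring D a c e = (if e \<subseteq> D then c e + 2 else if \<exists>v. v \<notin> D \<and> e = {v, a v} then 0 else 1)"

lemma extend_colouring_inside: "e \<subseteq> D \<Longrightarrow> extend_colouring D a c e = c e + 2"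
  unfolding extend_colouring_def by simp

lemma extend_colouring_first: "v \<notin> D \<Longrightarrow> extend_colouring D a c {v, a v} = 0"
  unfolding extend_colouring_def by auto

lemma extend_colouring_second:
  assumes "v \<notin> D" "a v \<in> D" "b \<in> D" "a v \<noteq> b"
  shows "extend_colouring D a c {v, b} = 1"
proof -
  have "{v, b} \<noteq> {v', a v'}" if "v' \<notin> D" for v'
    using assms that by (auto simp: doubleton_eq_iff)
  then show ?thesis using assms(1) unfolding extend_colouring_def by auto
qed

lemma extend_colouring_rainbow_path_inside:
  assumes "D \<subseteq> V" "rainbow_connected D (induced_edges E D) c" "x \<in> D" "y \<in> D"
  shows "\<exists>p. is_path V E p x y \<and> set p \<subseteq> D \<and> rainbow (extend_colouring D a c) p
    \<and> (\<forall>e\<in>set (path_edges p). 2 \<le> extend_colouring D a c e)"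
proof -
  obtain p where p: "is_path D (induced_edges E D) p x y" "rainbow c p"
    using assms(2-4) unfolding rainbow_connected_def by blast
  have p': "is_path V E p x y" "set p \<subseteq> D" using is_path_induced[OF p(1) assms(1)] by simp_all
  have shift: "\<And>e. e \<in> set (path_edges p) \<Longrightarrow> extend_colouring D a c e = c e + 2"
    using path_edges_subset[OF p'(2)] extend_colouring_inside by blast
  have "rainbow (extend_colouring D a c) p"
    using rainbow_cong[of p _ "\<lambda>e. c e + 2", OF shift] rainbow_shift[of c 2 p] p(2) by simp
  then show ?thesis using p' shift by auto
qed

lemma rainbow_connected_extend_colouring:
  assumes "D \<subseteq> V" "rainbow_connected D (induced_edges E D) c"
    and ab: "\<And>v. v \<in> V - D \<Longrightarrow> a v \<in> D \<and> b v \<in> D \<and> a v \<noteq> b v \<and> {v, a v} \<in> E \<and> {v, b v} \<in> E"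
  shows "rainbow_connected V E (extend_colouring D a c)"
proof -
  let ?c = "extend_colouring D a c"
  note inside = extend_colouring_rainbow_path_inside[OF assms(1,2), of _ _ a]
  have enter: "\<exists>p. is_path V E p u y \<and> set p \<subseteq> insert u D \<and> rainbow ?c p \<and> 1 \<notin> ?c ` set (path_edges p)"
    if u: "u \<in> V" and y: "y \<in> D" for u y
  proof (cases "u \<in> D")
    case True
    then show ?thesis using inside[OF True y] by fastforce
  next
    case False
    with u have uV: "u \<in> V - D" by blast
    obtain p where p: "is_path V E p (a u) y" "set p \<subseteq> D" "rainbow ?c p" "\<forall>e\<in>set (path_edges p). 2 \<le> ?c e"
      using inside[OF _ y] ab[OF uV] by blast
    have "is_path V E (u # p) u y \<and> rainbow ?c (u # p)"
      using p False u ab[OF uV] extend_colouring_first[OF False] by (intro rainbow_path_Cons) fastforce+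
    moreover have "p \<noteq> []" "hd p = a u" using p(1) unfolding is_path_def by simp_all
    ultimately show ?thesis
      using p(2,4) extend_colouring_first[OF False] by (intro exI[of _ "u # p"]) (auto simp: path_edges_Cons)
  qed
  show ?thesis
    unfolding rainbow_connected_def
  proof (intro ballI)
    fix u v assume uv: "u \<in> V" "v \<in> V"
    consider "u = v" | "v \<in> D" | "v \<in> V - D" "v \<notin> insert u D"
      using uv by blast
    then show "\<exists>p. is_path V E p u v \<and> rainbow ?c p"
    proof cases
      case 1
      then show ?thesis using is_path_singleton[OF uv(1)] rainbow_singleton[of ?c u] by auto
    next
      case 2
      then show ?thesis using enter[OF uv(1) 2] by blast
    next
      case 3
      obtain p where p: "is_path V E p u (b v)" "set p \<subseteq> insert u D" "rainbow ?c p"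
        "1 \<notin> ?c ` set (path_edges p)"
        using enter[OF uv(1)] ab[OF 3(1)] by blast
      have bv: "{b v, v} \<in> E" "?c {b v, v} = 1"
        using extend_colouring_second[of v D a "b v" c] ab[OF 3(1)] 3(1) by (simp_all add: insert_commute)
      moreover have "v \<notin> set p" using p(2) 3(2) by blast
      ultimately have "is_path V E (p @ [v]) u v \<and> rainbow ?c (p @ [v])"
        using rainbow_path_snoc[OF p(1,3) uv(2)] p(4) by simp
      then show ?thesis by blast
    qed
  qed
qed

lemma rc_le_rc_induced_add_two:
  assumes "simple_graph V E" "D \<subseteq> V" "connected_graph D (induced_edges E D)"
    and "\<forall>v\<in>V - D. 2 \<le> card (neighbors E v \<inter> D)"
  shows "rc V E \<le> rc D (induced_edges E D) + 2"
proof -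
  have "\<forall>v\<in>V - D. \<exists>x y. x \<in> D \<and> y \<in> D \<and> x \<noteq> y \<and> {v, x} \<in> E \<and> {v, y} \<in> E"
    using assms(4) card_ge_2_imp_distinct unfolding neighbors_def by fastforce
  then obtain a b where ab: "\<And>v. v \<in> V - D \<Longrightarrow> a v \<in> D \<and> b v \<in> D \<and> a v \<noteq> b v \<and> {v, a v} \<in> E \<and> {v, b v} \<in> E"
    by metis
  obtain c where c: "\<forall>e\<in>induced_edges E D. c e < rc D (induced_edges E D)"
    "rainbow_connected D (induced_edges E D) c"
    using rc_optimal_colouring[OF simple_graph_induced[OF assms(1,2)] assms(3)] by blast
  have "\<forall>e\<in>E. extend_colouring D a c e < rc D (induced_edges E D) + 2"
    using c(1) unfolding extend_colouring_def induced_edges_def by auto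
  then show ?thesis
    unfolding rc_def using rainbow_connected_extend_colouring[OF assms(2) c(2) ab]
    by (intro Least_le) blast
qed

theorem lemma1:
  fixes V :: "'a set" and E :: "'a set set" and D :: "'a set"
  assumes "simple_graph V E"
    and "connected_graph V E"
    and "D \<subseteq> V"
    and "connected_graph D (induced_edges E D)"
    and "\<forall>v \<in> V - D. card (neighbors E v \<inter> D) \<ge> 2"
  shows "rc V E \<le> card D + 1"
proof -
  have "D \<noteq> {}" using assms(4) unfolding connected_graph_def by blast
  then have "0 < card D"
    using assms(1,3) finite_subset card_gt_0_iff unfolding simple_graph_def by blast
  have "rc V E \<le> rc D (induced_edges E D) + 2"
    using rc_le_rc_induced_add_two[OF assms(1,3,4,5)] .
  also have "\<dots> \<le> card D - 1 + 2"
    using rc_le_card_minus_one[OF simple_graph_induced[OF assms(1,3)] assms(4)] by simp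
  finally show ?thesis using \<open>0 < card D\<close> by simp
qed

end
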